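(* Let $(X,\tau,\mathcal{I})$ be an ideal topological space such that $(X,\tau)$ is semi-Alexandroff, $(X,\tau,\mathcal{I})$ is a $T_{\mathcal{I}}$-space, and $\mathcal{I}$ is a $\tau$-boundary. If $(X,\tau)$ is resolvable, then $(X,\tau,\mathcal{I})$ is $\mathcal{I}$-resolvable.
   Context: An ideal on a topological space $(X,\tau)$ is a nonempty collection $\mathcal{I}$ of subsets of $X$ closed under taking subsets and finite unions. $(X,\tau,\mathcal{I})$ is a $T_{\mathcal{I}}$-space if for every $I\in\mathcal{I}$ and every $x\in X\setminus I$ there is a set $A_x$ with $x\in A_x$, $A_x\cap I=\emptyset$, and $A_x$ open or closed. A set is semi-open if it lies between an open set and that open set's closure; $(X,\tau)$ is semi-Alexandroff if every intersection of open sets is semi-open. $\mathcal{I}$ is a $\tau$-boundary if $\tau\cap\mathcal{I}=\{\emptyset\}$. For $A\subseteq X$, the local function is $A^*=\{x\in X: U\cap A\notin\mathcal{I}\text{ for every open }U\ni x\}$; $A$ is $\mathcal{I}$-dense if $A^*=X$. A nonempty space is resolvable if $X$ is the disjoint union of two dense subsets, and $(X,\tau,\mathcal{I})$ is $\mathcal{I}$-resolvable if $X$ is the disjoint union of two $\mathcal{I}$-dense subsets. *)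

theory Defs
  imports "HOL-Analysis.Analysis"
begin

definition is_ideal :: "'a topology \<Rightarrow> 'a set set \<Rightarrow> bool" where
  "is_ideal T I \<longleftrightarrow> I \<noteq> {} \<and> (\<forall>A\<in>I. A \<subseteq> topspace T)
     \<and> (\<forall>A\<in>I. \<forall>B. B \<subseteq> A \<longrightarrow> B \<in> I) \<and> (\<forall>A\<in>I. \<forall>B\<in>I. A \<union> B \<in> I)"

definition T_I_space :: "'a topology \<Rightarrow> 'a set set \<Rightarrow> bool" where
  "T_I_space T I \<longleftrightarrow> (\<forall>J\<in>I. \<forall>x\<in>topspace T - J. \<exists>A. x \<in> A \<and> A \<inter> J = {}
      \<and> (openin T A \<or> closedin T A))"

definition semi_openin :: "'a topology \<Rightarrow> 'a set \<Rightarrow> bool" where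
  "semi_openin T A \<longleftrightarrow> (\<exists>U. openin T U \<and> U \<subseteq> A \<and> A \<subseteq> T closure_of U)"

definition semi_Alexandroff :: "'a topology \<Rightarrow> bool" where
  "semi_Alexandroff T \<longleftrightarrow> (\<forall>\<U>. (\<forall>U\<in>\<U>. openin T U) \<longrightarrow> semi_openin T (topspace T \<inter> \<Inter>\<U>))"

definition tau_boundary :: "'a topology \<Rightarrow> 'a set set \<Rightarrow> bool" where
  "tau_boundary T I \<longleftrightarrow> {U. openin T U} \<inter> I = {{}}"

definition local_function :: "'a topology \<Rightarrow> 'a set set \<Rightarrow> 'a set \<Rightarrow> 'a set" where
  "local_function T I A = {x \<in> topspace T. \<forall>U. openin T U \<and> x \<in> U \<longrightarrow> U \<inter> A \<notin> I}"

definition I_dense :: "'a topology \<Rightarrow> 'a set set \<Rightarrow> 'a set \<Rightarrow> bool" where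
  "I_dense T I A \<longleftrightarrow> local_function T I A = topspace T"

definition resolvable :: "'a topology \<Rightarrow> bool" where
  "resolvable T \<longleftrightarrow> topspace T \<noteq> {} \<and> (\<exists>A B. A \<union> B = topspace T \<and> A \<inter> B = {}
      \<and> T closure_of A = topspace T \<and> T closure_of B = topspace T)"

definition I_resolvable :: "'a topology \<Rightarrow> 'a set set \<Rightarrow> bool" where
  "I_resolvable T I \<longleftrightarrow> (\<exists>A B. A \<union> B = topspace T \<and> A \<inter> B = {}
      \<and> I_dense T I A \<and> I_dense T I B)"

end

theory Submission
  imports Defs
begin

text \<open>Every dense set is already \<open>\<I>\<close>-dense. Suppose \<open>D\<close> is dense but \<open>J = W \<inter> D \<in> \<I>\<close> for some
  nonempty open \<open>W\<close>. Then \<open>W \<subseteq> closure J\<close>, so an open set containing a point of \<open>W - J\<close> must meet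
  \<open>J\<close>; hence the \<open>T\<^sub>\<I>\<close>-axiom separates every such point from \<open>J\<close> by a closed set. Consequently \<open>J\<close>
  is the intersection of \<open>W\<close> with the complements of these closed sets, which is semi-open in a
  semi-Alexandroff space. A semi-open member of a \<open>\<tau>\<close>-boundary ideal is empty, contradicting the
  density of \<open>D\<close>.\<close>

lemma T_I_space_separate_closedin:
  assumes "T_I_space T I" "J \<in> I" "y \<in> T closure_of J - J"
  obtains A where "closedin T A" "y \<in> A" "A \<inter> J = {}"
proof -
  have "y \<in> topspace T - J"
    using assms(3) closure_of_subset_topspace[of T J] by blast
  then obtain A where A: "y \<in> A" "A \<inter> J = {}" "openin T A \<or> closedin T A"
    using assms(1,2) unfolding T_I_space_def by blast
  have "\<not> openin T A"
  proof
    assume "openin T A"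
    moreover have "y \<in> T closure_of J"
      using assms(3) by blast
    ultimately have "\<exists>a\<in>J. a \<in> A"
      using A(1) unfolding in_closure_of by blast
    with A(2) show False
      by blast
  qed
  with A that show ?thesis
    by blast
qed

lemma T_I_space_ideal_eq_Inter_openin:
  assumes "T_I_space T I" "J \<in> I" "openin T W" "J \<subseteq> W" "W \<subseteq> T closure_of J"
  obtains \<U> where "\<forall>U\<in>\<U>. openin T U" "topspace T \<inter> \<Inter>\<U> = J"
proof
  define \<U> where "\<U> = insert W ((\<lambda>A. topspace T - A) ` {A. closedin T A \<and> A \<inter> J = {}})"
  show "\<forall>U\<in>\<U>. openin T U"
    using assms(3) unfolding \<U>_def by blast
  have "y \<in> J" if y: "y \<in> topspace T \<inter> \<Inter>\<U>" for y
  proof (rule ccontr)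
    assume "y \<notin> J"
    moreover have "y \<in> W"
      using y unfolding \<U>_def by blast
    ultimately have "y \<in> T closure_of J - J"
      using assms(5) by blast
    then obtain A where A: "closedin T A" "y \<in> A" "A \<inter> J = {}"
      using T_I_space_separate_closedin assms(1,2) by metis
    then have "topspace T - A \<in> \<U>"
      unfolding \<U>_def by blast
    with y A(2) show False
      by blast
  qed
  moreover have "J \<subseteq> U" if "U \<in> \<U>" for U
    using that assms(3,4) openin_subset unfolding \<U>_def by blast
  moreover have "J \<subseteq> topspace T"
    using assms(3,4) openin_subset by blast
  ultimately show "topspace T \<inter> \<Inter>\<U> = J"
    by blast
qed

lemma tau_boundary_semi_openin_empty:
  assumes "is_ideal T I" "tau_boundary T I" "semi_openin T J" "J \<in> I"
  shows "J = {}"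
proof -
  obtain G where G: "openin T G" "G \<subseteq> J" "J \<subseteq> T closure_of G"
    using assms(3) unfolding semi_openin_def by blast
  have "G \<in> I"
    using assms(1,4) G(2) unfolding is_ideal_def by blast
  with G(1) assms(2) have "G = {}"
    unfolding tau_boundary_def by blast
  with G(3) show ?thesis
    by simp
qed

lemma dense_imp_I_dense:
  assumes "is_ideal T I" "semi_Alexandroff T" "T_I_space T I" "tau_boundary T I"
    and dense: "T closure_of D = topspace T"
  shows "I_dense T I D"
  unfolding I_dense_def local_function_def
proof safe
  fix x W
  assume "x \<in> topspace T" and W: "openin T W" "x \<in> W" and J: "W \<inter> D \<in> I"
  have "W \<subseteq> T closure_of (W \<inter> D)"
    using openin_Int_closure_of_subset[OF W(1), of D] dense W(1) openin_subset by blast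
  then obtain \<U> where "\<forall>U\<in>\<U>. openin T U" "topspace T \<inter> \<Inter>\<U> = W \<inter> D"
    using T_I_space_ideal_eq_Inter_openin[OF assms(3) J W(1)] by blast
  with assms(2) have "semi_openin T (W \<inter> D)"
    unfolding semi_Alexandroff_def by metis
  with assms(1,4) J have "W \<inter> D = {}"
    using tau_boundary_semi_openin_empty by blast
  with W show False
    using \<open>W \<subseteq> T closure_of (W \<inter> D)\<close> by auto
qed

theorem mainTheorem2:
  fixes T :: "'a topology" and I :: "'a set set"
  assumes "is_ideal T I"
    and "semi_Alexandroff T"
    and "T_I_space T I"
    and "tau_boundary T I"
    and "resolvable T"
  shows "I_resolvable T I"
proof -
  obtain A B where AB: "A \<union> B = topspace T" "A \<inter> B = {}"
    "T closure_of A = topspace T" "T closure_of B = topspace T"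
    using assms(5) unfolding resolvable_def by blast
  then have "I_dense T I A" "I_dense T I B"
    using dense_imp_I_dense[OF assms(1-4)] by blast+
  with AB show ?thesis
    unfolding I_resolvable_def by blast
qed

end
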